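(* For integers $m\ge2$, $k\ge1$ let $V_J(m,k)=\left(1-\frac1m\right)\frac{k}{\ln m}$ and $V_H(m,k)=\frac{k(m^{1/k}-1)}{\ln m}$. Then $\min_{m\in\mathbb{Z}_{\ge2},\,k\in\mathbb{Z}_{\ge1}}\max\{V_J(m,k),V_H(m,k)\}=\frac{2(\sqrt3-1)}{\ln 3}$, attained at $m=3$, $k=2$. *)

theory Defs
  imports Complex_Main
begin

definition V_J :: "nat \<Rightarrow> nat \<Rightarrow> real" where
  "V_J m k = (1 - 1 / real m) * real k / ln (real m)"

definition V_H :: "nat \<Rightarrow> nat \<Rightarrow> real" where
  "V_H m k = real k * (real m powr (1 / real k) - 1) / ln (real m)"

end

theory Submission
  imports Defs
begin

(* With t = ln m / k both values are functions of t and m alone: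
   V_H = (e^t - 1) / t, which increases with t, and V_J = (1 - 1/m) / t, which decreases.
   The pair (3, 2) sits at t0 = ln 3 / 2.  For t >= t0 monotonicity gives V_H >= V_H 3 2.
   For t < t0 we get V_J > (1 - 1/m) / t0, which is already large enough once m >= 4;
   for m = 2 and m = 3 the condition t < t0 forces k >= 2 resp. k >= 3, and V_J is then
   checked directly. *)

lemma exp_minus_one_div_mono:
  fixes s t :: real
  assumes "0 < s" "s \<le> t"
  shows "(exp s - 1) / s \<le> (exp t - 1) / t"
proof -
  have tangent: "exp s * (1 + (t - s)) \<le> exp t"
    using exp_ge_add_one_self[of "t - s"] by (simp add: exp_diff field_simps)
  have "1 - s \<le> exp (- s)"
    using exp_ge_add_one_self[of "- s"] by simp
  then have slope: "exp s - 1 \<le> s * exp s"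
    by (simp add: exp_minus field_simps)
  have "(exp s - 1) * t = (exp s - 1) * s + (exp s - 1) * (t - s)"
    by (simp add: algebra_simps)
  also have "\<dots> \<le> (exp s - 1) * s + s * exp s * (t - s)"
    using slope assms by (intro add_left_mono mult_right_mono) auto
  also have "\<dots> = s * (exp s * (1 + (t - s)) - 1)"
    by (simp add: algebra_simps)
  also have "\<dots> \<le> s * (exp t - 1)"
    using tangent assms by (intro mult_left_mono) auto
  finally show ?thesis
    using assms by (simp add: divide_simps mult.commute)
qed

lemma V_H_eq_slope:
  assumes "m > 0"
  shows "V_H m k = (exp (ln (real m) / real k) - 1) / (ln (real m) / real k)"
  using assms by (simp add: V_H_def powr_def)

lemma V_J_eq:
  "V_J m k = (1 - 1 / real m) / (ln (real m) / real k)"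
  by (simp add: V_J_def)

lemma sqrt_3_bounds: "5 / 3 \<le> sqrt (3::real)" "sqrt (3::real) \<le> 7 / 4"
  by (rule real_le_rsqrt real_le_lsqrt; simp add: power2_eq_square)+

lemma ln_2_ln_3_bounds: "ln 3 \<le> 2 * ln (2::real)" "3 * ln 2 \<le> 2 * ln (3::real)"
proof -
  have "ln 3 \<le> ln ((2::real) ^ 2)" "ln ((2::real) ^ 3) \<le> ln (3 ^ 2)"
    by simp_all
  then show "ln 3 \<le> 2 * ln (2::real)" "3 * ln 2 \<le> 2 * ln (3::real)"
    by (simp_all only: ln_realpow)
qed

lemma V_H_3_2: "V_H 3 2 = 2 * (sqrt 3 - 1) / ln 3"
  by (simp add: V_H_def powr_half_sqrt)

lemma V_H_lower_bound:
  assumes "m > 0" "ln 3 / 2 \<le> ln (real m) / real k"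
  shows "2 * (sqrt 3 - 1) / ln 3 \<le> V_H m k"
proof -
  have "2 * (sqrt 3 - 1) / ln 3 = (exp (ln 3 / 2) - 1) / (ln 3 / 2)"
    by (simp add: powr_def flip: powr_half_sqrt)
  also have "\<dots> \<le> V_H m k"
    unfolding V_H_eq_slope[OF \<open>m > 0\<close>]
    using assms(2) by (intro exp_minus_one_div_mono) auto
  finally show ?thesis .
qed

lemma V_J_lower_bound:
  assumes "m \<ge> 2" "k \<ge> 1" "ln (real m) / real k < ln 3 / 2"
  shows "2 * (sqrt 3 - 1) / ln 3 \<le> V_J m k"
proof -
  consider "m = 2" | "m = 3" | "m \<ge> 4"
    using assms(1) by linarith
  then show ?thesis
  proof cases
    case 1
    have "k \<ge> 2"
      using assms(3) ln_2_ln_3_bounds(1) \<open>m = 2\<close> \<open>k \<ge> 1\<close> by (cases "k = 1") auto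
    then have V_J_bound: "1 / ln 2 \<le> V_J m k"
      using \<open>m = 2\<close> by (simp add: V_J_def divide_simps)
    have "2 * (sqrt 3 - 1) * ln 2 \<le> 3 / 2 * ln 2"
      using sqrt_3_bounds(2) by (intro mult_right_mono) auto
    then have "2 * (sqrt 3 - 1) * ln 2 \<le> ln 3"
      using ln_2_ln_3_bounds(2) by linarith
    then have "2 * (sqrt 3 - 1) / ln 3 \<le> 1 / ln 2"
      by (simp add: divide_simps)
    with V_J_bound show ?thesis
      by linarith
  next
    case 2
    have "k \<ge> 3"
      using assms(3) \<open>m = 3\<close> \<open>k \<ge> 1\<close> by (auto simp: divide_simps)
    then have "2 / ln 3 \<le> V_J m k"
      using \<open>m = 3\<close> by (simp add: V_J_def divide_simps)
    moreover have "2 * (sqrt 3 - 1) / ln 3 \<le> 2 / ln 3"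
      using sqrt_3_bounds(2) by (simp add: divide_simps)
    ultimately show ?thesis
      by linarith
  next
    case 3
    have "0 < ln (real m) / real k"
      using assms by simp
    have "1 / real m \<le> 1 / 4"
      using \<open>m \<ge> 4\<close> by (simp add: divide_simps)
    then have "sqrt 3 - 1 \<le> 1 - 1 / real m"
      using sqrt_3_bounds(2) by linarith
    then have "2 * (sqrt 3 - 1) / ln 3 \<le> (1 - 1 / real m) / (ln 3 / 2)"
      by (simp add: divide_right_mono)
    also have "\<dots> \<le> V_J m k"
      unfolding V_J_eq using assms(3) \<open>0 < ln (real m) / real k\<close> \<open>1 / real m \<le> 1 / 4\<close>
      by (intro divide_left_mono mult_pos_pos) auto
    finally show ?thesis .
  qed
qed

theorem claim3p2:
  shows "(\<forall>m k::nat. m \<ge> 2 \<longrightarrow> k \<ge> 1 \<longrightarrow>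
            2 * (sqrt 3 - 1) / ln 3 \<le> max (V_J m k) (V_H m k))
       \<and> max (V_J 3 2) (V_H 3 2) = 2 * (sqrt 3 - 1) / ln 3"
proof (intro conjI allI impI)
  fix m k :: nat
  assume "m \<ge> 2" "k \<ge> 1"
  then show "2 * (sqrt 3 - 1) / ln 3 \<le> max (V_J m k) (V_H m k)"
    using V_H_lower_bound[of m k] V_J_lower_bound[of m k]
    by (cases "ln 3 / 2 \<le> ln (real m) / real k") force+
next
  have "V_J 3 2 \<le> V_H 3 2"
    using sqrt_3_bounds(1) by (simp add: V_H_3_2 V_J_def divide_simps)
  then show "max (V_J 3 2) (V_H 3 2) = 2 * (sqrt 3 - 1) / ln 3"
    by (simp add: V_H_3_2)
qed

end
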